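(* Let $R\subseteq S$, $\sigma$ be as in the context, and $n=n_1+\cdots+n_\ell$. Let $\mathbf{a}=(a_1,\ldots,a_\ell)\in(S^* )^\ell$ and $\beta_{i,j}\in S$ ($1\le i\le\ell$, $1\le j\le n_i$) satisfy: (i) $a_i-a_j^\beta\in S^*$ for all $\beta\in S^*$ and $1\le i<j\le\ell$; (ii) for each $i$, $\beta_{i,1},\ldots,\beta_{i,n_i}$ are $R$-linearly independent. Let $c_{i,j}\in S$ for $1\le j\le n_i$, $1\le i\le\ell$. Then there exists a unique skew polynomial $F\in S[x;\sigma]$ with $\deg(F)\le n-1$ and $F_{a_i}(\beta_{i,j})=c_{i,j}$ for all $1\le j\le n_i$, $1\le i\le\ell$.
   Context: $R$ is a finite commutative chain ring with maximal ideal $\mathfrak{m}$, $q=|R/\mathfrak{m}|$; $S=R[x]/(h)$ with $h$ monic of degree $m$ irreducible modulo $\mathfrak{m}$, local with maximal ideal $\mathfrak{M}=\mathfrak{m}S$ and unit group $S^*=S\setminus\mathfrak{M}$. $\sigma$ is a ring automorphism of $S$ generating the Galois group of $R\subseteq S$, with fixed ring $R$, reducing modulo $\mathfrak{M}$ to $y\mapsto y^q$. $S[x;\sigma]$ is the skew polynomial ring with $xa=\sigma(a)x$; the zero polynomial has degree $-\infty$. For $a,\beta\in S$: $N_i(a)=\sigma^{i-1}(a)\cdots\sigma(a)a$, $\mathcal{D}_a^i(\beta)=\sigma^i(\beta)N_i(a)$, and for $F=\sum_iF_ix^i$, $F_a(\beta)=\sum_iF_i\mathcal{D}_a^i(\beta)$.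 For $\beta\in S^*$, $a^\beta=\sigma(\beta)a\beta^{-1}$. *)

theory Defs
  imports "HOL-Computational_Algebra.Polynomial"
begin

text \<open>The ring S is the ambient type 'a; the subring R is a carrier set R of elements of 'a.\<close>

definition subring_set :: "'a::comm_ring_1 set \<Rightarrow> bool" where
  "subring_set R \<longleftrightarrow> 0 \<in> R \<and> 1 \<in> R \<and>
     (\<forall>x\<in>R. \<forall>y\<in>R. x + y \<in> R \<and> x - y \<in> R \<and> x * y \<in> R)"

definition ideal_in :: "'a::comm_ring_1 set \<Rightarrow> 'a set \<Rightarrow> bool" where
  "ideal_in R I \<longleftrightarrow> I \<subseteq> R \<and> 0 \<in> I \<and>
     (\<forall>x\<in>I. \<forall>y\<in>I. x + y \<in> I) \<and> (\<forall>r\<in>R. \<forall>x\<in>I. r * x \<in> I)"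

definition chain_ring :: "'a::comm_ring_1 set \<Rightarrow> bool" where
  "chain_ring R \<longleftrightarrow> subring_set R \<and> finite R \<and> (0::'a) \<noteq> 1 \<and>
     (\<forall>I J. ideal_in R I \<and> ideal_in R J \<longrightarrow> I \<subseteq> J \<or> J \<subseteq> I)"

definition max_ideal :: "'a::comm_ring_1 set \<Rightarrow> 'a set" where
  "max_ideal R = {x \<in> R. \<not> (\<exists>y\<in>R. x * y = 1)}"

definition residue_card :: "'a::comm_ring_1 set \<Rightarrow> nat" where
  "residue_card R = card ((\<lambda>x. {y \<in> R. x - y \<in> max_ideal R}) ` R)"

definition poly_over :: "'a::comm_ring_1 set \<Rightarrow> 'a poly \<Rightarrow> bool" where
  "poly_over R p \<longleftrightarrow> (\<forall>i. coeff p i \<in> R)"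

definition irreducible_mod_max :: "'a::comm_ring_1 set \<Rightarrow> 'a poly \<Rightarrow> bool" where
  "irreducible_mod_max R h \<longleftrightarrow> degree h \<ge> 1 \<and>
     \<not> (\<exists>f g. poly_over R f \<and> poly_over R g \<and> lead_coeff f = 1 \<and> lead_coeff g = 1 \<and>
            degree f \<ge> 1 \<and> degree g \<ge> 1 \<and> (\<forall>i. coeff (h - f * g) i \<in> max_ideal R))"

text \<open>S (= UNIV) is R[x]/(h): h monic over R, irreducible mod m, and there is a root theta of h
  such that evaluation at theta is a bijection from the R-polynomials of degree < deg h onto S.\<close>
definition is_quot_by :: "'a::comm_ring_1 set \<Rightarrow> 'a poly \<Rightarrow> bool" where
  "is_quot_by R h \<longleftrightarrow> poly_over R h \<and> lead_coeff h = 1 \<and> irreducible_mod_max R h \<and>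
     (\<exists>\<theta>. poly h \<theta> = 0 \<and>
        bij_betw (\<lambda>p. poly p \<theta>) {p. poly_over R p \<and> degree p < degree h} (UNIV :: 'a set))"

definition ring_aut :: "('a::comm_ring_1 \<Rightarrow> 'a) \<Rightarrow> bool" where
  "ring_aut \<tau> \<longleftrightarrow> bij \<tau> \<and> \<tau> 1 = 1 \<and> (\<forall>x y. \<tau> (x + y) = \<tau> x + \<tau> y \<and> \<tau> (x * y) = \<tau> x * \<tau> y)"

definition galois_group :: "'a::comm_ring_1 set \<Rightarrow> ('a \<Rightarrow> 'a) set" where
  "galois_group R = {\<tau>. ring_aut \<tau> \<and> (\<forall>r\<in>R. \<tau> r = r)}"

text \<open>Maximal ideal M = mS of the local ring S; S* = S - M are the units.\<close>
definition max_ideal_S :: "'a::comm_ring_1 set" where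
  "max_ideal_S = {s. \<not> s dvd 1}"

definition galois_ctx :: "'a::{comm_ring_1,finite} set \<Rightarrow> 'a poly \<Rightarrow> ('a \<Rightarrow> 'a) \<Rightarrow> bool" where
  "galois_ctx R h \<sigma> \<longleftrightarrow> chain_ring R \<and> is_quot_by R h \<and>
     \<sigma> \<in> galois_group R \<and> (\<forall>\<tau>\<in>galois_group R. \<exists>k. \<tau> = \<sigma> ^^ k) \<and>
     {s. \<sigma> s = s} = R \<and>
     (\<forall>y. \<sigma> y - y ^ residue_card R \<in> max_ideal_S)"

definition unit_inv :: "'a::comm_ring_1 \<Rightarrow> 'a" where
  "unit_inv b = (SOME g. b * g = 1)"

text \<open>a^beta = sigma(beta) a beta^{-1}.\<close>
definition sconj :: "('a::comm_ring_1 \<Rightarrow> 'a) \<Rightarrow> 'a \<Rightarrow> 'a \<Rightarrow> 'a" where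
  "sconj \<sigma> a b = \<sigma> b * a * unit_inv b"

definition Nnorm :: "('a::comm_ring_1 \<Rightarrow> 'a) \<Rightarrow> nat \<Rightarrow> 'a \<Rightarrow> 'a" where
  "Nnorm \<sigma> i a = (\<Prod>k<i. (\<sigma> ^^ k) a)"

definition Dop :: "('a::comm_ring_1 \<Rightarrow> 'a) \<Rightarrow> 'a \<Rightarrow> nat \<Rightarrow> 'a \<Rightarrow> 'a" where
  "Dop \<sigma> a i b = (\<sigma> ^^ i) b * Nnorm \<sigma> i a"

text \<open>Skew polynomials F = sum F_i x^i in S[x;sigma] are represented by their coefficient
  sequence (an 'a poly, used only as a container of coefficients).
  F_a(beta) = sum_i F_i D_a^i(beta).\<close>
definition skew_eval :: "('a::comm_ring_1 \<Rightarrow> 'a) \<Rightarrow> 'a poly \<Rightarrow> 'a \<Rightarrow> 'a \<Rightarrow> 'a" where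
  "skew_eval \<sigma> F a b = (\<Sum>i\<le>degree F. coeff F i * Dop \<sigma> a i b)"

definition R_lin_indep :: "'a::comm_ring_1 set \<Rightarrow> nat \<Rightarrow> (nat \<Rightarrow> 'a) \<Rightarrow> bool" where
  "R_lin_indep R k v \<longleftrightarrow> (\<forall>r. (\<forall>j\<in>{1..k}. r j \<in> R) \<and> (\<Sum>j=1..k. r j * v j) = 0
       \<longrightarrow> (\<forall>j\<in>{1..k}. r j = 0))"

end

(* Uniqueness is proved by induction on n = n_1 + ... + n_l. Let F have degree < n and vanish at
   all the points. Pick i with n_i > 0 and put b = a_i^beta, beta = beta_{i,1}; then (x - b)_{a_i}
   kills beta, a unit. Dividing F = Q (x - b) + r on the right, the product rule
   (Q (x - b) + r)_a(g) = Q_a((x - b)_a(g)) + r g gives r = 0, and Q, of degree < n - 1, vanishes at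
   the points (x - b)_{a_j}(beta_{j,k}) with beta_{i,1} left out. The map (x - b)_{a_j} is R-linear;
   for j = i its kernel is R beta, and for j <> i it sends units to units by condition (i), so it is
   injective because every element of S is r u with r in R and u a unit. Hence the new points again
   satisfy (ii), and Q = 0 by induction. Existence follows by counting: evaluation is an injective
   map between two sets of size |S|^n.
   The ring-theoretic input (S = R S^*, and every non-unit of S is killed by a nonzero element of R)
   holds because the maximal ideal of R is principal and nilpotent and S/mS is a field. *)

theory Submission
  imports Defs "HOL-Library.FuncSet"
begin

subsection \<open>Finite chain rings\<close>

lemma subring_set_closed:
  assumes "subring_set R"
  shows "0 \<in> R" "1 \<in> R"
    and "x \<in> R \<Longrightarrow> y \<in> R \<Longrightarrow> x + y \<in> R" "x \<in> R \<Longrightarrow> y \<in> R \<Longrightarrow> x - y \<in> R"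
    and "x \<in> R \<Longrightarrow> y \<in> R \<Longrightarrow> x * y \<in> R" "x \<in> R \<Longrightarrow> - x \<in> R"
  using assms unfolding subring_set_def by (auto simp flip: diff_0)

lemma subring_set_power: "subring_set R \<Longrightarrow> x \<in> R \<Longrightarrow> x ^ n \<in> R"
  by (induction n) (simp_all add: subring_set_closed)

lemma chain_ring_subring_set: "chain_ring R \<Longrightarrow> subring_set R"
  unfolding chain_ring_def by auto

definition principal_ideal :: "'a::comm_ring_1 set \<Rightarrow> 'a \<Rightarrow> 'a set" where
  "principal_ideal R x = {x * r | r. r \<in> R}"

lemma principal_ideal_self: "subring_set R \<Longrightarrow> x \<in> principal_ideal R x"
  unfolding principal_ideal_def subring_set_def by (metis (mono_tags) mem_Collect_eq mult_1_right)

lemma ideal_in_principal_ideal: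
  assumes sR: "subring_set R" and x: "x \<in> R"
  shows "ideal_in R (principal_ideal R x)"
  unfolding ideal_in_def
proof (intro conjI ballI)
  show "principal_ideal R x \<subseteq> R"
    unfolding principal_ideal_def using sR x subring_set_closed(5) by blast
  show "0 \<in> principal_ideal R x"
    unfolding principal_ideal_def using sR x subring_set_closed(1) by force
next
  fix y z assume "y \<in> principal_ideal R x" "z \<in> principal_ideal R x"
  then show "y + z \<in> principal_ideal R x"
    unfolding principal_ideal_def using sR subring_set_closed(3) by (force simp: distrib_left)
next
  fix r y assume "r \<in> R" "y \<in> principal_ideal R x"
  then show "r * y \<in> principal_ideal R x"
    unfolding principal_ideal_def using sR subring_set_closed(5) by (force simp: mult.left_commute)
qed

lemma chain_ring_principal_ideals_nested:
  assumes "chain_ring R" "x \<in> R" "y \<in> R"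
  shows "principal_ideal R x \<subseteq> principal_ideal R y \<or> principal_ideal R y \<subseteq> principal_ideal R x"
  using assms ideal_in_principal_ideal[OF chain_ring_subring_set] unfolding chain_ring_def by blast

lemma chain_ring_divides_cases:
  assumes cr: "chain_ring R" and "x \<in> R" "y \<in> R"
  obtains t where "t \<in> R" "x = y * t" | t where "t \<in> R" "y = x * t"
proof -
  have "x \<in> principal_ideal R x" "y \<in> principal_ideal R y"
    using principal_ideal_self[OF chain_ring_subring_set[OF cr]] by auto
  then have "x \<in> principal_ideal R y \<or> y \<in> principal_ideal R x"
    using chain_ring_principal_ideals_nested[OF assms] by blast
  then show thesis using that unfolding principal_ideal_def by blast
qed

lemma max_ideal_mult_left:
  assumes sR: "subring_set R" and r: "r \<in> R" and x: "x \<in> max_ideal R"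
  shows "r * x \<in> max_ideal R"
proof -
  have xR: "x \<in> R" and no_inv: "\<And>y. y \<in> R \<Longrightarrow> x * y \<noteq> 1"
    using x unfolding max_ideal_def by auto
  have "r * x * y \<noteq> 1" if "y \<in> R" for y
    using no_inv[of "r * y"] subring_set_closed(5)[OF sR r that] by (simp add: ac_simps)
  then show ?thesis using subring_set_closed(5)[OF sR r xR] unfolding max_ideal_def by auto
qed

lemma chain_ring_max_ideal_add:
  assumes cr: "chain_ring R" and x: "x \<in> max_ideal R" and y: "y \<in> max_ideal R"
  shows "x + y \<in> max_ideal R"
proof -
  have sR: "subring_set R" using cr by (rule chain_ring_subring_set)
  have "x \<in> R" "y \<in> R" using x y unfolding max_ideal_def by auto
  then show ?thesis
  proof (cases rule: chain_ring_divides_cases[OF cr])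
    fix t assume "t \<in> R" "x = y * t"
    then have "x + y = (t + 1) * y" "t + 1 \<in> R" using sR by (simp_all add: algebra_simps subring_set_closed)
    then show ?thesis using max_ideal_mult_left[OF sR _ y] by simp
  next
    fix t assume "t \<in> R" "y = x * t"
    then have "x + y = (t + 1) * x" "t + 1 \<in> R" using sR by (simp_all add: algebra_simps subring_set_closed)
    then show ?thesis using max_ideal_mult_left[OF sR _ x] by simp
  qed
qed

lemma chain_ring_zero_in_max_ideal: "chain_ring R \<Longrightarrow> 0 \<in> max_ideal R"
  unfolding max_ideal_def chain_ring_def subring_set_def by auto

lemma one_notin_max_ideal: "1 \<notin> max_ideal R"
  unfolding max_ideal_def by auto

lemma invertible_if_notin_max_ideal: "x \<in> R \<Longrightarrow> x \<notin> max_ideal R \<Longrightarrow> \<exists>y\<in>R. x * y = 1"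
  unfolding max_ideal_def by auto

text \<open>The generator is an element of the maximal ideal whose principal ideal has maximal size.\<close>
lemma chain_ring_max_ideal_principal:
  assumes cr: "chain_ring (R :: 'a::{comm_ring_1,finite} set)"
  obtains \<pi> where "\<pi> \<in> max_ideal R" "\<And>x. x \<in> max_ideal R \<Longrightarrow> \<exists>r\<in>R. x = \<pi> * r"
proof -
  have sR: "subring_set R" using cr by (rule chain_ring_subring_set)
  let ?size = "\<lambda>x. card (principal_ideal R x)"
  have "Max (?size ` max_ideal R) \<in> ?size ` max_ideal R"
    using chain_ring_zero_in_max_ideal[OF cr] by (intro Max_in) auto
  then obtain \<pi> where \<pi>: "\<pi> \<in> max_ideal R" "?size \<pi> = Max (?size ` max_ideal R)"
    by (metis (no_types, lifting) imageE)
  then have max: "?size x \<le> ?size \<pi>" if "x \<in> max_ideal R" for x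
    using that by simp
  have "\<exists>r\<in>R. x = \<pi> * r" if x: "x \<in> max_ideal R" for x
  proof -
    have "x \<in> R" "\<pi> \<in> R" using x \<pi> unfolding max_ideal_def by auto
    then consider "principal_ideal R x \<subseteq> principal_ideal R \<pi>"
      | "principal_ideal R \<pi> \<subseteq> principal_ideal R x"
      using chain_ring_principal_ideals_nested[OF cr] by blast
    then have "principal_ideal R x \<subseteq> principal_ideal R \<pi>"
    proof cases
      case 2
      then have "card (principal_ideal R \<pi>) \<le> card (principal_ideal R x)" by (simp add: card_mono)
      then show ?thesis using card_subset_eq[OF _ 2] max[OF x] by simp
    qed
    then show ?thesis using principal_ideal_self[OF sR, of x] unfolding principal_ideal_def by blast
  qed
  then show thesis using that \<pi> by blast
qed

text \<open>As \<open>R\<close> is finite, \<open>x^i = x^(i+d)\<close> for some \<open>i\<close> and \<open>d > 0\<close>; since \<open>1 - x^d\<close> is a unit,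
  \<open>x^i = 0\<close>.\<close>
lemma chain_ring_max_ideal_nilpotent:
  assumes cr: "chain_ring (R :: 'a::{comm_ring_1,finite} set)" and x: "x \<in> max_ideal R"
  obtains k where "x ^ k = 0"
proof -
  have sR: "subring_set R" using cr by (rule chain_ring_subring_set)
  have xR: "x \<in> R" using x unfolding max_ideal_def by auto
  have "\<not> inj (\<lambda>i::nat. x ^ i)"
    using finite_imageD[of "\<lambda>i::nat. x ^ i" UNIV] by auto
  then obtain i j where ij: "i < j" "x ^ i = x ^ j"
    unfolding inj_def by (metis linorder_neqE_nat)
  define d where "d = j - i"
  have d: "d \<ge> 1" "j = i + d" using ij unfolding d_def by auto
  have xd: "x ^ d \<in> max_ideal R"
    using max_ideal_mult_left[OF sR subring_set_power[OF sR xR] x, of "d - 1"] d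
    by (metis le_add_diff_inverse2 power_add power_one_right)
  have "1 - x ^ d \<notin> max_ideal R"
    using chain_ring_max_ideal_add[OF cr _ xd] one_notin_max_ideal by fastforce
  moreover have "1 - x ^ d \<in> R" using sR xR by (simp add: subring_set_closed subring_set_power)
  ultimately obtain y where "(1 - x ^ d) * y = 1" using invertible_if_notin_max_ideal by blast
  moreover have "x ^ i * (1 - x ^ d) = 0" using ij d by (simp add: algebra_simps power_add)
  ultimately have "x ^ i = 0" by (metis mult.assoc mult_1_right mult_zero_left)
  then show thesis by (rule that)
qed

subsection \<open>Polynomials with coefficients in \<open>R\<close>\<close>

lemma poly_over_closed:
  assumes "subring_set R"
  shows "poly_over R 0"
    and "poly_over R p \<Longrightarrow> poly_over R q \<Longrightarrow> poly_over R (p + q)"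
    and "poly_over R p \<Longrightarrow> poly_over R q \<Longrightarrow> poly_over R (p - q)"
    and "c \<in> R \<Longrightarrow> poly_over R (monom c n)"
    and "c \<in> R \<Longrightarrow> poly_over R p \<Longrightarrow> poly_over R (monom c n * p)"
    and "c \<in> R \<Longrightarrow> poly_over R p \<Longrightarrow> poly_over R (smult c p)"
    and "poly_over R p \<Longrightarrow> poly_over R (poly_cutoff n p)"
  using assms unfolding poly_over_def
  by (auto simp: coeff_monom_mult coeff_poly_cutoff subring_set_closed)

lemma monic_division:
  assumes sR: "subring_set R" and g: "poly_over R g" "lead_coeff g = 1" and p: "poly_over R p"
  obtains q r where "poly_over R q" "poly_over R r" "p = g * q + r" "r = 0 \<or> degree r < degree g"
  using p
proof (induction "degree p" arbitrary: p thesis rule: less_induct)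
  case less
  show ?case
  proof (cases "degree p < degree g")
    case True
    then show ?thesis using less.prems poly_over_closed(1)[OF sR] by (intro less.prems(1)[of 0 p]) auto
  next
    case False
    define c where "c = lead_coeff p"
    define d where "d = degree p - degree g"
    define p' where "p' = p - monom c d * g"
    have cR: "c \<in> R" using less.prems(2) unfolding c_def poly_over_def by auto
    have p'R: "poly_over R p'" unfolding p'_def using less.prems(2) g cR sR by (simp add: poly_over_closed)
    have "coeff p' k = 0" if "degree p \<le> k" for k
      using that False g unfolding p'_def c_def d_def
      by (cases "k = degree p") (auto simp: coeff_monom_mult coeff_eq_0)
    then have p'_small: "p' = 0 \<or> degree p' < degree p"
      by (metis leading_coeff_0_iff linorder_not_less)
    show ?thesis
    proof (cases "p' = 0")
      case True
      then have "p = g * monom c d + 0" unfolding p'_def by (simp add: mult.commute)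
      then show ?thesis using cR sR by (intro less.prems(1)[of "monom c d" 0]) (simp_all add: poly_over_closed)
    next
      case False
      obtain q r where qr: "poly_over R q" "poly_over R r" "p' = g * q + r" "r = 0 \<or> degree r < degree g"
        using less.hyps[of p'] p'_small False p'R by blast
      have "p = g * (q + monom c d) + r" using qr(3) unfolding p'_def by (simp add: algebra_simps)
      then show ?thesis using qr cR sR by (intro less.prems(1)[of "q + monom c d" r]) (simp_all add: poly_over_closed)
    qed
  qed
qed

lemma monic_mult:
  fixes g q :: "'a::comm_ring_1 poly"
  assumes g: "lead_coeff g = 1" and q: "q \<noteq> 0"
  shows "degree (g * q) = degree g + degree q" "lead_coeff (g * q) = lead_coeff q"
proof -
  have top: "coeff (g * q) (degree g + degree q) = lead_coeff q"
    using coeff_mult_degree_sum[of g q] g by simp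
  show deg: "degree (g * q) = degree g + degree q"
    using top q degree_mult_le[of g q] by (intro antisym le_degree) auto
  show "lead_coeff (g * q) = lead_coeff q" using top deg by simp
qed

lemma monic_division_quotient_monic:
  fixes g h q r :: "'a::comm_ring_1 poly"
  assumes h: "lead_coeff h = 1" and g: "lead_coeff g = 1" and gh: "degree g \<le> degree h"
    and div: "h = g * q + r" "r = 0 \<or> degree r < degree g"
  shows "lead_coeff q = 1" "degree h = degree g + degree q"
proof -
  have "q \<noteq> 0"
  proof
    assume "q = 0"
    then have "h = r" using div(1) by simp
    then show False using div(2) gh h by auto
  qed
  then have gq: "degree (g * q) = degree g + degree q" "lead_coeff (g * q) = lead_coeff q"
    using monic_mult[OF g] by auto
  have "r = 0 \<or> degree r < degree (g * q)" using div(2) gq(1) by auto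
  moreover have "h = r + g * q" using div(1) by simp
  ultimately have "degree h = degree (g * q) \<and> lead_coeff h = lead_coeff (g * q)"
    by (auto simp: degree_add_eq_right coeff_eq_0)
  then show "lead_coeff q = 1" "degree h = degree g + degree q" using gq h by auto
qed

lemma dvd_poly_if_coeffs_in_max_ideal:
  assumes gen: "\<And>x. x \<in> max_ideal R \<Longrightarrow> \<exists>r\<in>R. x = \<pi> * r"
    and coeffs: "\<And>i. coeff p i \<in> max_ideal R"
  shows "\<pi> dvd poly p \<theta>"
  using coeffs
proof (induction p rule: pCons_induct)
  case (pCons x p)
  obtain r where "x = \<pi> * r" using gen pCons.prems[of 0] by auto
  then have "\<pi> dvd x" by simp
  moreover have "\<pi> dvd poly p \<theta>" using pCons.IH pCons.prems[of "Suc _"] by simp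
  ultimately show ?case by simp
qed simp

subsection \<open>The residue ring \<open>S/\<pi>S\<close> is a field\<close>

lemma ideal_in_UNIV_closed:
  assumes "ideal_in UNIV I"
  shows "x \<in> I \<Longrightarrow> y \<in> I \<Longrightarrow> x + y \<in> I" "x \<in> I \<Longrightarrow> r * x \<in> I"
    and "x \<in> I \<Longrightarrow> y \<in> I \<Longrightarrow> x - y \<in> I"
proof -
  show add: "x \<in> I \<Longrightarrow> y \<in> I \<Longrightarrow> x + y \<in> I" and mult: "x \<in> I \<Longrightarrow> r * x \<in> I" for x y r
    using assms unfolding ideal_in_def by auto
  show "x \<in> I \<Longrightarrow> y \<in> I \<Longrightarrow> x - y \<in> I"
    using add[of x "(- 1) * y"] mult[of y "- 1"] by simp
qed

lemma ideal_in_UNIV_combinations: "ideal_in UNIV {s * t + u * y | t y. True}"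
  unfolding ideal_in_def
proof (intro conjI ballI)
  show "0 \<in> {s * t + u * y | t y. True}" by (metis (mono_tags) add_0 mem_Collect_eq mult_zero_right)
next
  fix x z assume "x \<in> {s * t + u * y | t y. True}" "z \<in> {s * t + u * y | t y. True}"
  then obtain t1 y1 t2 y2 where "x = s * t1 + u * y1" "z = s * t2 + u * y2" by blast
  then have "x + z = s * (t1 + t2) + u * (y1 + y2)" by (simp add: algebra_simps)
  then show "x + z \<in> {s * t + u * y | t y. True}" by blast
next
  fix r x assume "x \<in> {s * t + u * y | t y. True}"
  then obtain t y where "x = s * t + u * y" by blast
  then have "r * x = s * (r * t) + u * (r * y)" by (simp add: algebra_simps)
  then show "r * x \<in> {s * t + u * y | t y. True}" by blast
qed simp

text \<open>Otherwise drop the terms of \<open>p\<close> above its highest unit coefficient (their value lies in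
  \<open>\<pi>S \<subseteq> I\<close>) and normalise: this gives a monic polynomial of degree at most \<open>degree p\<close> with
  value in \<open>I\<close>.\<close>
lemma coeffs_in_max_ideal_if_no_lower_monic:
  assumes cr: "chain_ring R" and gen: "\<And>x. x \<in> max_ideal R \<Longrightarrow> \<exists>r\<in>R. x = \<pi> * r"
    and I: "ideal_in UNIV I" "\<pi> \<in> I"
    and p: "poly_over R p" "poly p \<theta> \<in> I"
    and no_monic: "\<And>g. poly_over R g \<Longrightarrow> lead_coeff g = 1 \<Longrightarrow> poly g \<theta> \<in> I \<Longrightarrow> degree p < degree g"
  shows "coeff p i \<in> max_ideal R"
proof (rule ccontr)
  assume i: "coeff p i \<notin> max_ideal R"
  define K where "K = {j. coeff p j \<notin> max_ideal R}"
  have "K \<subseteq> {..degree p}"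
    using chain_ring_zero_in_max_ideal[OF cr] by (auto simp: K_def intro: le_degree)
  then have "finite K" by (rule finite_subset) simp
  define k where "k = Max K"
  have "k \<in> K" unfolding k_def using \<open>finite K\<close> i by (intro Max_in) (auto simp: K_def)
  then have k: "coeff p k \<notin> max_ideal R" "k \<le> degree p" using \<open>K \<subseteq> {..degree p}\<close> K_def by auto
  have above: "coeff p j \<in> max_ideal R" if "k < j" for j
    using that Max_ge[OF \<open>finite K\<close>] unfolding k_def K_def by fastforce
  obtain u where u: "u \<in> R" "coeff p k * u = 1"
    using invertible_if_notin_max_ideal k(1) p(1) unfolding poly_over_def by blast
  define low where "low = poly_cutoff (Suc k) p"
  have "\<pi> dvd poly (p - low) \<theta>"
    using gen chain_ring_zero_in_max_ideal[OF cr] above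
    by (intro dvd_poly_if_coeffs_in_max_ideal) (auto simp: low_def coeff_poly_cutoff)
  then have "poly (p - low) \<theta> \<in> I" using ideal_in_UNIV_closed(2)[OF I(1) I(2)] by (metis dvdE mult.commute)
  then have "poly low \<theta> \<in> I" using ideal_in_UNIV_closed(3)[OF I(1) p(2)] by force
  define g where "g = smult u low"
  have coeff_g: "coeff g j = (if j \<le> k then u * coeff p j else 0)" for j
    by (simp add: g_def low_def coeff_poly_cutoff)
  have "coeff g k = 1" using u by (simp add: coeff_g mult.commute)
  then have "degree g = k" using coeff_g by (intro antisym degree_le le_degree) auto
  have "poly_over R g" using p(1) u(1) chain_ring_subring_set[OF cr]
    by (simp add: g_def low_def poly_over_closed)
  moreover have "lead_coeff g = 1" using \<open>coeff g k = 1\<close> \<open>degree g = k\<close> by simp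
  moreover have "poly g \<theta> \<in> I"
    using ideal_in_UNIV_closed(2)[OF I(1) \<open>poly low \<theta> \<in> I\<close>] by (simp add: g_def)
  ultimately show False using no_monic \<open>degree g = k\<close> k(2) by fastforce
qed

lemma degree_le_monic_in_ideal:
  assumes cr: "chain_ring R" and gen: "\<And>x. x \<in> max_ideal R \<Longrightarrow> \<exists>r\<in>R. x = \<pi> * r"
    and I: "ideal_in UNIV I" "\<pi> \<in> I" "1 \<notin> I"
    and h: "poly_over R h" "lead_coeff h = 1" "irreducible_mod_max R h" "poly h \<theta> = 0"
    and g: "poly_over R g" "lead_coeff g = 1" "poly g \<theta> \<in> I"
  shows "degree h \<le> degree g"
proof (rule ccontr)
  let ?P = "\<lambda>g. poly_over R g \<and> lead_coeff g = 1 \<and> poly g \<theta> \<in> I"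
  obtain g0 where g0: "?P g0" and min: "\<And>g. ?P g \<Longrightarrow> degree g0 \<le> degree g"
    using ex_has_least_nat[of ?P g degree] g by blast
  assume "\<not> degree h \<le> degree g"
  then have g0h: "degree g0 < degree h" using min g by fastforce
  have "degree g0 \<noteq> 0"
  proof
    assume "degree g0 = 0"
    then have "g0 = 1" using g0 by (metis degree_0_id one_pCons)
    then show False using g0 I(3) by simp
  qed
  obtain q r where div: "poly_over R q" "poly_over R r" "h = g0 * q + r" "r = 0 \<or> degree r < degree g0"
    using monic_division[OF chain_ring_subring_set[OF cr] _ _ h(1)] g0 by blast
  have "poly r \<theta> = (- poly q \<theta>) * poly g0 \<theta>"
    using div(3) h(4) by (simp add: algebra_simps eq_neg_iff_add_eq_0)
  then have "poly r \<theta> \<in> I" using ideal_in_UNIV_closed(2)[OF I(1)] g0 by metis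
  moreover have "degree r < degree g0" using div(4) \<open>degree g0 \<noteq> 0\<close> by auto
  ultimately have "coeff (h - g0 * q) i \<in> max_ideal R" for i
    using coeffs_in_max_ideal_if_no_lower_monic[OF cr gen I(1,2) div(2)] min div(3)
    by (simp add: order_less_le_trans)
  moreover have "lead_coeff q = 1" "degree h = degree g0 + degree q"
    using monic_division_quotient_monic[OF h(2) _ _ div(3,4)] g0 g0h by auto
  ultimately show False
    using h(3) g0 div(1) \<open>degree g0 \<noteq> 0\<close> g0h unfolding irreducible_mod_max_def by force
qed

lemma one_minus_nilpotent_unit:
  fixes z :: "'a::comm_ring_1"
  assumes "z ^ e = 0"
  shows "(1 - z) dvd 1"
  using one_diff_power_eq[of z e] assms by (metis diff_zero dvdI)

lemma uniformizer_dvd_nonunit: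
  assumes cr: "chain_ring R" and hq: "is_quot_by R h"
    and gen: "\<And>x. x \<in> max_ideal R \<Longrightarrow> \<exists>r\<in>R. x = \<pi> * r" and nil: "\<pi> ^ e = 0"
    and s: "\<not> s dvd 1"
  shows "\<pi> dvd s"
proof -
  define I where "I = {s * t + \<pi> * y | t y. True}"
  have I: "ideal_in UNIV I" unfolding I_def by (rule ideal_in_UNIV_combinations)
  have in_I: "s * t + \<pi> * y \<in> I" for t y unfolding I_def by blast
  have "\<pi> \<in> I" "s \<in> I" using in_I[of 0 1] in_I[of 1 0] by simp_all
  have "1 \<notin> I"
  proof
    assume "1 \<in> I"
    then obtain t y where "1 = s * t + \<pi> * y" unfolding I_def by blast
    then have "s * t = 1 - \<pi> * y" by (simp add: algebra_simps)
    moreover have "(1 - \<pi> * y) dvd 1" using nil by (intro one_minus_nilpotent_unit[of _ e]) (simp add: power_mult_distrib)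
    ultimately show False using s by (metis dvd_mult_left)
  qed
  obtain \<theta> where \<theta>: "poly h \<theta> = 0"
    and onto: "bij_betw (\<lambda>p. poly p \<theta>) {p. poly_over R p \<and> degree p < degree h} UNIV"
    using hq unfolding is_quot_by_def by blast
  obtain p where p: "poly_over R p" "degree p < degree h" "s = poly p \<theta>"
    using onto unfolding bij_betw_def by (metis (no_types, lifting) UNIV_I imageE mem_Collect_eq)
  have "coeff p i \<in> max_ideal R" for i
    using coeffs_in_max_ideal_if_no_lower_monic[OF cr gen I \<open>\<pi> \<in> I\<close> p(1)] p(2,3) \<open>s \<in> I\<close>
      degree_le_monic_in_ideal[OF cr gen I \<open>\<pi> \<in> I\<close> \<open>1 \<notin> I\<close>, of h \<theta>] hq \<theta>
    unfolding is_quot_by_def by fastforce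
  then show ?thesis using dvd_poly_if_coeffs_in_max_ideal[OF gen] p(3) by blast
qed

lemma chain_ring_extension_base_times_unit:
  fixes R :: "'a::{comm_ring_1,finite} set"
  assumes cr: "chain_ring R" and hq: "is_quot_by R h"
  shows "\<exists>r\<in>R. \<exists>w. w dvd 1 \<and> s = r * w"
proof -
  have sR: "subring_set R" using cr by (rule chain_ring_subring_set)
  obtain \<pi> where \<pi>: "\<pi> \<in> max_ideal R" and gen: "\<And>x. x \<in> max_ideal R \<Longrightarrow> \<exists>r\<in>R. x = \<pi> * r"
    using chain_ring_max_ideal_principal[OF cr] by blast
  obtain e where nil: "\<pi> ^ e = 0" using chain_ring_max_ideal_nilpotent[OF cr \<pi>] by blast
  have \<pi>R: "\<pi> \<in> R" using \<pi> unfolding max_ideal_def by auto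
  have "(\<exists>r\<in>R. \<exists>w. w dvd 1 \<and> s = r * w) \<or> \<pi> ^ k dvd s" for k
  proof (induction k)
    case (Suc k)
    show ?case
    proof (cases "\<pi> ^ k dvd s")
      case True
      then obtain y where y: "s = \<pi> ^ k * y" by (rule dvdE)
      show ?thesis
      proof (cases "y dvd 1")
        case True
        then show ?thesis using y subring_set_power[OF sR \<pi>R] by blast
      next
        case False
        then have "\<pi> dvd y" using uniformizer_dvd_nonunit[OF cr hq gen nil] by blast
        then have "\<pi> ^ k * \<pi> dvd \<pi> ^ k * y" by (rule mult_dvd_mono[OF dvd_refl])
        then show ?thesis using y by (simp add: power_Suc2 del: power_Suc)
      qed
    qed (use Suc.IH in blast)
  qed simp
  from this[of e] have "(\<exists>r\<in>R. \<exists>w. w dvd 1 \<and> s = r * w) \<or> s = 0" using nil by simp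
  then show ?thesis
  proof
    assume "s = 0"
    then show ?thesis using subring_set_closed(1)[OF sR] by (intro bexI[of _ 0] exI[of _ 1]) simp_all
  qed
qed

lemma chain_ring_extension_nonunit_annihilated:
  fixes R :: "'a::{comm_ring_1,finite} set"
  assumes cr: "chain_ring R" and hq: "is_quot_by R h" and b: "\<not> b dvd 1"
  shows "\<exists>r\<in>R. r \<noteq> 0 \<and> r * b = 0"
proof -
  have sR: "subring_set R" using cr by (rule chain_ring_subring_set)
  obtain r w where rw: "r \<in> R" "w dvd 1" "b = r * w"
    using chain_ring_extension_base_times_unit[OF cr hq] by blast
  have "r \<in> max_ideal R"
  proof (rule ccontr)
    assume "r \<notin> max_ideal R"
    then obtain u where "r * u = 1" using invertible_if_notin_max_ideal[OF rw(1)] by blast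
    then have "r dvd 1" by (rule dvdI[OF sym])
    then show False using b rw(2,3) mult_dvd_mono[of r 1 w 1] by simp
  qed
  then obtain n where "r ^ n = 0" by (rule chain_ring_max_ideal_nilpotent[OF cr])
  define m where "m = (LEAST n. r ^ n = 0)"
  have "r ^ m = 0" unfolding m_def using \<open>r ^ n = 0\<close> by (rule LeastI)
  moreover have "m \<noteq> 0" using \<open>r ^ m = 0\<close> cr unfolding chain_ring_def by (intro notI) simp
  ultimately obtain k where k: "r ^ Suc k = 0" "r ^ k \<noteq> 0"
    using not_less_Least[of _ "\<lambda>n. r ^ n = 0"] unfolding m_def by (metis lessI not0_implies_Suc)
  have "r ^ k * b = r ^ Suc k * w" using rw(3) by (simp add: algebra_simps)
  then show ?thesis using k subring_set_power[OF sR rw(1)] by auto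
qed


subsection \<open>Ring automorphisms and units\<close>

context
  fixes \<sigma> :: "'a::comm_ring_1 \<Rightarrow> 'a"
  assumes aut: "ring_aut \<sigma>"
begin

lemma ring_aut_add: "\<sigma> (x + y) = \<sigma> x + \<sigma> y"
  and ring_aut_mult: "\<sigma> (x * y) = \<sigma> x * \<sigma> y"
  and ring_aut_1: "\<sigma> 1 = 1"
  using aut unfolding ring_aut_def by auto

lemma ring_aut_0: "\<sigma> 0 = 0"
  using ring_aut_add[of 0 0] by simp

lemma ring_aut_uminus: "\<sigma> (- x) = - \<sigma> x"
  using ring_aut_add[of x "- x"] by (simp add: ring_aut_0 eq_neg_iff_add_eq_0 add.commute)

lemma ring_aut_diff: "\<sigma> (x - y) = \<sigma> x - \<sigma> y"
  using ring_aut_add[of x "- y"] by (simp add: ring_aut_uminus)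

lemma ring_aut_sum: "\<sigma> (sum f A) = (\<Sum>i\<in>A. \<sigma> (f i))"
  by (induction A rule: infinite_finite_induct) (simp_all add: ring_aut_0 ring_aut_add)

lemma ring_aut_dvd_one:
  assumes "x dvd 1"
  shows "\<sigma> x dvd 1"
proof -
  obtain k where "1 = x * k" using assms by (rule dvdE)
  have "\<sigma> x * \<sigma> k = \<sigma> (x * k)" by (simp add: ring_aut_mult)
  also have "\<dots> = 1" using \<open>1 = x * k\<close> ring_aut_1 by simp
  finally show ?thesis by (rule dvdI[OF sym])
qed

end

lemma ring_aut_funpow: "ring_aut \<sigma> \<Longrightarrow> ring_aut (\<sigma> ^^ k)"
  by (induction k) (auto simp: ring_aut_def bij_comp)

lemma mult_dvd_one_iff: "(a::'a::comm_semiring_1) * b dvd 1 \<longleftrightarrow> a dvd 1 \<and> b dvd 1"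
  using mult_dvd_mono[of a 1 b 1] by (auto dest: dvd_mult_left dvd_mult_right)

lemma unit_inv_right:
  assumes "b dvd 1"
  shows "b * unit_inv b = 1"
proof -
  obtain k where "1 = b * k" using assms by (rule dvdE)
  then have "\<exists>g. b * g = 1" by auto
  then show ?thesis unfolding unit_inv_def by (rule someI_ex)
qed

lemma unit_inv_eq:
  assumes "b * c = 1"
  shows "unit_inv b = c"
proof -
  have "b dvd 1" using assms by (rule dvdI[OF sym])
  then have "unit_inv b = unit_inv b * (b * c)" using assms by simp
  also have "\<dots> = (b * unit_inv b) * c" by (simp add: mult_ac)
  also have "\<dots> = c" using unit_inv_right[OF \<open>b dvd 1\<close>] by simp
  finally show ?thesis .
qed

lemma unit_inv_dvd_one: "b dvd 1 \<Longrightarrow> unit_inv b dvd 1"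
  using unit_inv_right[of b] by (simp add: dvdI mult.commute)

lemma unit_inv_unit_inv: "b dvd 1 \<Longrightarrow> unit_inv (unit_inv b) = b"
  by (simp add: mult.commute unit_inv_eq unit_inv_right)

lemma unit_inv_mult: "b dvd 1 \<Longrightarrow> c dvd 1 \<Longrightarrow> unit_inv (b * c) = unit_inv b * unit_inv c"
  using unit_inv_right[of b] unit_inv_right[of c]
  by (intro unit_inv_eq) (simp add: mult_ac)

subsection \<open>Skew conjugation\<close>

context
  fixes \<sigma> :: "'a::comm_ring_1 \<Rightarrow> 'a"
  assumes aut: "ring_aut \<sigma>"
begin

lemma sconj_dvd_one_iff:
  assumes "b dvd 1"
  shows "sconj \<sigma> x b dvd 1 \<longleftrightarrow> x dvd 1"
  using ring_aut_dvd_one[OF aut assms] unit_inv_dvd_one[OF assms]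
  unfolding sconj_def by (simp add: mult_dvd_one_iff)

lemma sconj_sconj:
  "b dvd 1 \<Longrightarrow> c dvd 1 \<Longrightarrow> sconj \<sigma> (sconj \<sigma> x b) c = sconj \<sigma> x (c * b)"
  unfolding sconj_def by (simp add: ring_aut_mult[OF aut] unit_inv_mult mult_ac)

lemma sconj_diff: "sconj \<sigma> (x - y) b = sconj \<sigma> x b - sconj \<sigma> y b"
  unfolding sconj_def by (simp add: algebra_simps)

lemma sconj_1: "sconj \<sigma> x 1 = x"
  unfolding sconj_def using unit_inv_eq[of "1::'a" 1] by (simp add: ring_aut_1[OF aut])

text \<open>Condition (i) of the theorem is symmetric in the two indices.\<close>
lemma sconj_diff_dvd_one_swap:
  assumes b: "b dvd 1" and u: "(x - sconj \<sigma> y b) dvd 1"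
  shows "(y - sconj \<sigma> x (unit_inv b)) dvd 1"
proof -
  have "sconj \<sigma> (sconj \<sigma> y b) (unit_inv b) = sconj \<sigma> y (unit_inv b * b)"
    using b unit_inv_dvd_one[OF b] by (rule sconj_sconj)
  also have "\<dots> = y" using unit_inv_right[OF b] by (simp add: mult.commute sconj_1)
  finally have "sconj \<sigma> (x - sconj \<sigma> y b) (unit_inv b) = sconj \<sigma> x (unit_inv b) - y"
    by (simp add: sconj_diff)
  moreover have "sconj \<sigma> (x - sconj \<sigma> y b) (unit_inv b) dvd 1"
    using sconj_dvd_one_iff[OF unit_inv_dvd_one[OF b]] u by simp
  ultimately have "(sconj \<sigma> x (unit_inv b) - y) dvd 1" by simp
  then show ?thesis using minus_dvd_iff[of "sconj \<sigma> x (unit_inv b) - y" 1] by simp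
qed

end

subsection \<open>Skew evaluation and right division by \<open>x - b\<close>\<close>

definition skew_eval_seq :: "('a::comm_ring_1 \<Rightarrow> 'a) \<Rightarrow> nat \<Rightarrow> (nat \<Rightarrow> 'a) \<Rightarrow> 'a \<Rightarrow> 'a \<Rightarrow> 'a" where
  "skew_eval_seq \<sigma> N f a g = (\<Sum>k<N. f k * Dop \<sigma> a k g)"

definition skew_eval_x_minus :: "('a::comm_ring_1 \<Rightarrow> 'a) \<Rightarrow> 'a \<Rightarrow> 'a \<Rightarrow> 'a \<Rightarrow> 'a" where
  "skew_eval_x_minus \<sigma> b a g = \<sigma> g * a - b * g"

text \<open>The coefficients of \<open>Q \<cdot> (x - b)\<close> in \<open>S[x;\<sigma>]\<close>, using \<open>x\<^sup>k b = \<sigma>\<^sup>k(b) x\<^sup>k\<close>.\<close>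
definition mult_x_minus :: "('a::comm_ring_1 \<Rightarrow> 'a) \<Rightarrow> (nat \<Rightarrow> 'a) \<Rightarrow> 'a \<Rightarrow> nat \<Rightarrow> 'a" where
  "mult_x_minus \<sigma> Q b k = (if k = 0 then 0 else Q (k - 1)) - Q k * (\<sigma> ^^ k) b"

lemma skew_eval_eq_skew_eval_seq:
  assumes "\<forall>k\<ge>N. coeff F k = 0"
  shows "skew_eval \<sigma> F a g = skew_eval_seq \<sigma> N (coeff F) a g"
proof (cases "F = 0")
  case False
  then have "degree F < N" using assms by (metis leading_coeff_0_iff not_le)
  then show ?thesis unfolding skew_eval_def skew_eval_seq_def
    by (intro sum.mono_neutral_left) (auto simp: coeff_eq_0)
qed (simp add: skew_eval_def skew_eval_seq_def)

lemma skew_eval_seq_diff: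
  "skew_eval_seq \<sigma> N (\<lambda>k. f k - f' k) a g = skew_eval_seq \<sigma> N f a g - skew_eval_seq \<sigma> N f' a g"
  unfolding skew_eval_seq_def by (simp add: sum_subtractf left_diff_distrib)

context
  fixes \<sigma> :: "'a::comm_ring_1 \<Rightarrow> 'a"
  assumes aut: "ring_aut \<sigma>"
begin

lemma Dop_0: "Dop \<sigma> a 0 g = g"
  unfolding Dop_def Nnorm_def by simp

lemma Dop_mult: "Dop \<sigma> a k (y * g) = (\<sigma> ^^ k) y * Dop \<sigma> a k g"
  unfolding Dop_def using ring_aut_mult[OF ring_aut_funpow[OF aut]] by (simp add: mult.assoc)

lemma Dop_diff: "Dop \<sigma> a k (g - g') = Dop \<sigma> a k g - Dop \<sigma> a k g'"
  unfolding Dop_def using ring_aut_diff[OF ring_aut_funpow[OF aut]] by (simp add: left_diff_distrib)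

lemma Dop_skew_mult_x: "Dop \<sigma> a k (\<sigma> g * a) = Dop \<sigma> a (Suc k) g"
  unfolding Dop_def Nnorm_def
  using ring_aut_mult[OF ring_aut_funpow[OF aut, of k]] by (simp add: funpow_swap1 mult_ac)

lemma skew_eval_seq_at_0: "skew_eval_seq \<sigma> N f a 0 = 0"
  unfolding skew_eval_seq_def Dop_def using ring_aut_0[OF ring_aut_funpow[OF aut]] by simp

lemma skew_eval_seq_mult_x_minus:
  assumes Q: "\<forall>k\<ge>N. Q k = 0"
  shows "skew_eval_seq \<sigma> (Suc N) (\<lambda>k. mult_x_minus \<sigma> Q b k + (if k = 0 then r else 0)) a g
    = skew_eval_seq \<sigma> N Q a (skew_eval_x_minus \<sigma> b a g) + r * g"
proof -
  have Dop_x_minus: "Dop \<sigma> a k (skew_eval_x_minus \<sigma> b a g) = Dop \<sigma> a (Suc k) g - (\<sigma> ^^ k) b * Dop \<sigma> a k g" for k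
    unfolding skew_eval_x_minus_def by (simp only: Dop_diff Dop_skew_mult_x Dop_mult[where y = b])
  have "skew_eval_seq \<sigma> N Q a (skew_eval_x_minus \<sigma> b a g)
      = (\<Sum>k<N. Q k * Dop \<sigma> a (Suc k) g) - (\<Sum>k<N. Q k * (\<sigma> ^^ k) b * Dop \<sigma> a k g)"
    unfolding skew_eval_seq_def by (simp add: Dop_x_minus right_diff_distrib sum_subtractf mult.assoc)
  also have "(\<Sum>k<N. Q k * Dop \<sigma> a (Suc k) g)
      = (\<Sum>k<Suc N. (if k = 0 then 0 else Q (k - 1)) * Dop \<sigma> a k g)"
    by (subst sum.lessThan_Suc_shift) simp
  also have "(\<Sum>k<N. Q k * (\<sigma> ^^ k) b * Dop \<sigma> a k g) = (\<Sum>k<Suc N. Q k * (\<sigma> ^^ k) b * Dop \<sigma> a k g)"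
    using Q by simp
  finally have "skew_eval_seq \<sigma> N Q a (skew_eval_x_minus \<sigma> b a g)
      = (\<Sum>k<Suc N. (if k = 0 then 0 else Q (k - 1)) * Dop \<sigma> a k g)
        - (\<Sum>k<Suc N. Q k * (\<sigma> ^^ k) b * Dop \<sigma> a k g)" .
  moreover have "r * g = (\<Sum>k<Suc N. (if k = 0 then r else 0) * Dop \<sigma> a k g)"
    by (simp add: Dop_0 if_distrib[of "\<lambda>c. c * _"] cong: if_cong)
  ultimately show ?thesis
    unfolding skew_eval_seq_def mult_x_minus_def by (simp add: sum_subtractf sum.distrib algebra_simps)
qed

end

lemma right_division_x_minus:
  assumes "\<forall>k>N. f k = 0"
  obtains Q r where "\<forall>k\<ge>N. Q k = 0" "f = (\<lambda>k. mult_x_minus \<sigma> Q b k + (if k = 0 then r else 0))"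
  using assms
proof (induction N arbitrary: f thesis)
  case 0
  show ?case
    by (rule "0.prems"(1)[of "\<lambda>_. 0" "f 0"]) (use "0.prems"(2) in \<open>auto simp: mult_x_minus_def\<close>)
next
  case (Suc N)
  define c where "c = f (Suc N)"
  define f' where "f' k = f k - mult_x_minus \<sigma> (\<lambda>j. if j = N then c else 0) b k" for k
  have "\<forall>k>N. f' k = 0" using Suc.prems(2) by (auto simp: f'_def c_def mult_x_minus_def)
  then obtain Q r where Q: "\<forall>k\<ge>N. Q k = 0" "f' = (\<lambda>k. mult_x_minus \<sigma> Q b k + (if k = 0 then r else 0))"
    using Suc.IH by blast
  show ?case
  proof (rule Suc.prems(1))
    show "\<forall>k\<ge>Suc N. (Q(N := c)) k = 0" using Q(1) by simp
    show "f = (\<lambda>k. mult_x_minus \<sigma> (Q(N := c)) b k + (if k = 0 then r else 0))"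
    proof
      fix k
      have "f k = f' k + mult_x_minus \<sigma> (\<lambda>j. if j = N then c else 0) b k" by (simp add: f'_def)
      then show "f k = mult_x_minus \<sigma> (Q(N := c)) b k + (if k = 0 then r else 0)"
        using Q by (auto simp: mult_x_minus_def)
    qed
  qed
qed

context
  fixes \<sigma> :: "'a::comm_ring_1 \<Rightarrow> 'a"
  assumes aut: "ring_aut \<sigma>"
begin

lemma skew_eval_x_minus_sconj_self:
  assumes "b dvd 1"
  shows "skew_eval_x_minus \<sigma> (sconj \<sigma> a b) a b = 0"
proof -
  have "sconj \<sigma> a b * b = \<sigma> b * a * (b * unit_inv b)" unfolding sconj_def by (simp add: mult_ac)
  then show ?thesis using unit_inv_right[OF assms] by (simp add: skew_eval_x_minus_def)
qed

lemma skew_eval_x_minus_sconj_unit: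
  assumes b: "b dvd 1" and w: "w dvd 1"
  shows "skew_eval_x_minus \<sigma> (sconj \<sigma> y b) x w = \<sigma> w * (x - sconj \<sigma> y (b * unit_inv w))"
proof -
  have "\<sigma> w * \<sigma> (unit_inv w) = 1"
    using ring_aut_mult[OF aut, of w "unit_inv w"] ring_aut_1[OF aut] unit_inv_right[OF w] by simp
  moreover have "unit_inv (b * unit_inv w) = unit_inv b * w"
    using unit_inv_mult[OF b unit_inv_dvd_one[OF w]] unit_inv_unit_inv[OF w] by simp
  ultimately show ?thesis
    unfolding skew_eval_x_minus_def sconj_def
    by (simp add: ring_aut_mult[OF aut] right_diff_distrib mult_ac)
qed

lemma skew_eval_x_minus_dvd_one:
  assumes "\<And>d. d dvd 1 \<Longrightarrow> (x - sconj \<sigma> y d) dvd 1" and b: "b dvd 1" and w: "w dvd 1"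
  shows "skew_eval_x_minus \<sigma> (sconj \<sigma> y b) x w dvd 1"
  using assms(1)[of "b * unit_inv w"] ring_aut_dvd_one[OF aut w] b unit_inv_dvd_one[OF w]
  by (simp add: skew_eval_x_minus_sconj_unit[OF b w] mult_dvd_one_iff)

end

subsection \<open>Linear independence over the fixed ring\<close>

locale skew_setting =
  fixes R :: "'a::comm_ring_1 set" and \<sigma> :: "'a \<Rightarrow> 'a"
  assumes aut: "ring_aut \<sigma>"
    and fixed_ring: "{x. \<sigma> x = x} = R"
    and base_times_unit: "\<And>s. \<exists>r\<in>R. \<exists>w. w dvd 1 \<and> s = r * w"
    and nonunit_annihilated: "\<And>b. \<not> b dvd 1 \<Longrightarrow> \<exists>r\<in>R. r \<noteq> 0 \<and> r * b = 0"
begin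

lemma mem_R_iff: "x \<in> R \<longleftrightarrow> \<sigma> x = x"
  using fixed_ring by blast

lemma skew_eval_x_minus_R_sum:
  assumes "\<forall>j\<in>A. r j \<in> R"
  shows "skew_eval_x_minus \<sigma> b x (\<Sum>j\<in>A. r j * v j) = (\<Sum>j\<in>A. r j * skew_eval_x_minus \<sigma> b x (v j))"
  using assms
  by (simp add: skew_eval_x_minus_def mem_R_iff ring_aut_sum[OF aut] ring_aut_mult[OF aut]
      sum_distrib_left sum_distrib_right sum_subtractf right_diff_distrib mult_ac)

text \<open>Since every element is \<open>r w\<close> with \<open>r \<in> R\<close> and \<open>w\<close> a unit, an \<open>R\<close>-linear map that
  sends units to units is injective.\<close>
lemma skew_eval_x_minus_inj:
  assumes units: "\<And>w. w dvd 1 \<Longrightarrow> skew_eval_x_minus \<sigma> b x w dvd 1"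
    and zero: "skew_eval_x_minus \<sigma> b x g = 0"
  shows "g = 0"
proof -
  obtain r w where rw: "r \<in> R" "w dvd 1" "g = r * w" using base_times_unit by blast
  then have "r * skew_eval_x_minus \<sigma> b x w = 0"
    using zero skew_eval_x_minus_R_sum[of "{()}" "\<lambda>_. r" b x "\<lambda>_. w"] by simp
  then have "r * skew_eval_x_minus \<sigma> b x w * unit_inv (skew_eval_x_minus \<sigma> b x w) = 0" by simp
  then have "r = 0" using unit_inv_right[OF units[OF rw(2)]] by (simp add: mult.assoc)
  then show ?thesis using rw by simp
qed

lemma skew_eval_x_minus_sconj_kernel:
  assumes x: "x dvd 1" and b: "b dvd 1" and zero: "skew_eval_x_minus \<sigma> (sconj \<sigma> x b) x g = 0"
  obtains t where "t \<in> R" "g = t * b"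
proof -
  define t where "t = g * unit_inv b"
  have "(\<sigma> g - \<sigma> b * unit_inv b * g) * x = 0"
    using zero unfolding skew_eval_x_minus_def sconj_def by (simp add: algebra_simps)
  then have "(\<sigma> g - \<sigma> b * unit_inv b * g) * (x * unit_inv x) = 0" by (simp add: mult.assoc[symmetric])
  then have \<sigma>g: "\<sigma> g = \<sigma> b * unit_inv b * g" using unit_inv_right[OF x] by simp
  have "\<sigma> t = (\<sigma> b * \<sigma> (unit_inv b)) * unit_inv b * g"
    by (simp add: t_def ring_aut_mult[OF aut] \<sigma>g mult_ac)
  also have "\<sigma> b * \<sigma> (unit_inv b) = 1"
    using ring_aut_mult[OF aut, of b "unit_inv b"] ring_aut_1[OF aut] unit_inv_right[OF b] by simp
  finally have "t \<in> R" by (simp add: mem_R_iff t_def mult.commute)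
  moreover have "t * b = g * (b * unit_inv b)" by (simp add: t_def mult_ac)
  then have "g = t * b" using unit_inv_right[OF b] by simp
  ultimately show thesis by (rule that)
qed

lemma R_lin_indep_dvd_one:
  assumes indep: "R_lin_indep R n v" and j: "j \<in> {1..n}"
  shows "v j dvd 1"
proof (rule ccontr)
  assume "\<not> v j dvd 1"
  then obtain r where r: "r \<in> R" "r \<noteq> 0" "r * v j = 0" using nonunit_annihilated by blast
  define r' where "r' i = (if i = j then r else 0)" for i
  have "0 \<in> R" using ring_aut_0[OF aut] by (simp add: mem_R_iff)
  then have "\<forall>i\<in>{1..n}. r' i \<in> R" using r by (simp add: r'_def)
  moreover have "(\<Sum>i=1..n. r' i * v i) = 0"
    using r(3) j by (simp add: r'_def if_distrib[of "\<lambda>c. c * _"] cong: if_cong)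
  ultimately have "r' j = 0" using indep j unfolding R_lin_indep_def by blast
  then show False using r(2) by (simp add: r'_def)
qed

lemma R_lin_indep_skew_eval_x_minus:
  assumes indep: "R_lin_indep R n v"
    and inj: "\<And>g. skew_eval_x_minus \<sigma> b x g = 0 \<Longrightarrow> g = 0"
  shows "R_lin_indep R n (\<lambda>j. skew_eval_x_minus \<sigma> b x (v j))"
  unfolding R_lin_indep_def
proof (intro allI impI)
  fix r assume r: "(\<forall>j\<in>{1..n}. r j \<in> R) \<and> (\<Sum>j=1..n. r j * skew_eval_x_minus \<sigma> b x (v j)) = 0"
  then have "(\<Sum>j=1..n. r j * v j) = 0"
    using inj skew_eval_x_minus_R_sum[of "{1..n}" r b x v] by simp
  then show "\<forall>j\<in>{1..n}. r j = 0" using indep r unfolding R_lin_indep_def by blast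
qed

text \<open>The kernel of \<open>(x - a^v\<^sub>1)\<^sub>a\<close> is \<open>R v\<^sub>1\<close>, so a relation among the images of
  \<open>v\<^sub>2, \<dots>, v\<^sub>n\<^sub>+\<^sub>1\<close> lifts to a relation among \<open>v\<^sub>1, \<dots>, v\<^sub>n\<^sub>+\<^sub>1\<close>.\<close>
lemma R_lin_indep_skew_eval_x_minus_tail:
  assumes indep: "R_lin_indep R (Suc n) v" and x: "x dvd 1"
  shows "R_lin_indep R n (\<lambda>j. skew_eval_x_minus \<sigma> (sconj \<sigma> x (v 1)) x (v (Suc j)))"
  unfolding R_lin_indep_def
proof (intro allI impI)
  have v1: "v 1 dvd 1" using R_lin_indep_dvd_one[OF indep] by simp
  fix r assume r: "(\<forall>j\<in>{1..n}. r j \<in> R) \<and>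
    (\<Sum>j=1..n. r j * skew_eval_x_minus \<sigma> (sconj \<sigma> x (v 1)) x (v (Suc j))) = 0"
  then have "skew_eval_x_minus \<sigma> (sconj \<sigma> x (v 1)) x (\<Sum>j=1..n. r j * v (Suc j)) = 0"
    using skew_eval_x_minus_R_sum[of "{1..n}" r _ x "\<lambda>j. v (Suc j)"] by simp
  then obtain t where t: "t \<in> R" "(\<Sum>j=1..n. r j * v (Suc j)) = t * v 1"
    using skew_eval_x_minus_sconj_kernel[OF x v1] by blast
  define r' where "r' j = (if j = 1 then - t else r (j - 1))" for j
  have "r' j \<in> R" if "j \<in> {1..Suc n}" for j
  proof (cases "j = 1")
    case False
    then have "j - 1 \<in> {1..n}" using that by auto
    then show ?thesis using r False by (simp add: r'_def)
  qed (use t(1) ring_aut_uminus[OF aut] in \<open>simp add: r'_def mem_R_iff\<close>)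
  have "(\<Sum>j=1..Suc n. r' j * v j) = r' 1 * v 1 + (\<Sum>j=Suc 1..Suc n. r' j * v j)"
    by (rule sum.atLeast_Suc_atMost) simp
  also have "(\<Sum>j=Suc 1..Suc n. r' j * v j) = (\<Sum>j=1..n. r j * v (Suc j))"
    unfolding sum.shift_bounds_cl_Suc_ivl by (simp add: r'_def)
  finally have "(\<Sum>j=1..Suc n. r' j * v j) = 0" using t(2) by (simp add: r'_def)
  with \<open>\<And>j. j \<in> {1..Suc n} \<Longrightarrow> r' j \<in> R\<close> have "\<forall>j\<in>{1..Suc n}. r' j = 0"
    using indep unfolding R_lin_indep_def by blast
  then have "r' (Suc j) = 0" if "j \<in> {1..n}" for j using that by simp
  then show "\<forall>j\<in>{1..n}. r j = 0" by (simp add: r'_def)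
qed

end

subsection \<open>Interpolation\<close>

lemma sconj_diff_dvd_one_symmetric:
  fixes l :: nat and a :: "nat \<Rightarrow> 'a::comm_ring_1"
  assumes aut: "ring_aut \<sigma>"
    and cond: "\<forall>i j b. 1 \<le> i \<and> i < j \<and> j \<le> l \<and> b dvd 1 \<longrightarrow> (a i - sconj \<sigma> (a j) b) dvd 1"
    and ij: "i \<in> {1..l}" "j \<in> {1..l}" "i \<noteq> j" and d: "d dvd 1"
  shows "(a i - sconj \<sigma> (a j) d) dvd 1"
proof (cases "i < j")
  case False
  then have "j < i" using ij(3) by linarith
  then have "(a j - sconj \<sigma> (a i) (unit_inv d)) dvd 1"
    using cond ij(1,2) unit_inv_dvd_one[OF d] by auto
  then show ?thesis
    using sconj_diff_dvd_one_swap[OF aut unit_inv_dvd_one[OF d]] unit_inv_unit_inv[OF d] by simp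
qed (use cond ij d in auto)

lemma bij_betw_Poly_bounded_degree:
  "bij_betw (\<lambda>g. Poly (map g [0..<n])) ({..<n} \<rightarrow>\<^sub>E (UNIV :: 'a::zero set))
    {F. \<forall>k\<ge>n. coeff F k = 0}"
proof (rule bij_betw_imageI)
  show "inj_on (\<lambda>g. Poly (map g [0..<n])) ({..<n} \<rightarrow>\<^sub>E (UNIV :: 'a set))"
  proof (rule inj_onI)
    fix g g' :: "nat \<Rightarrow> 'a" assume g: "g \<in> {..<n} \<rightarrow>\<^sub>E UNIV" "g' \<in> {..<n} \<rightarrow>\<^sub>E UNIV"
      and eq: "Poly (map g [0..<n]) = Poly (map g' [0..<n])"
    have "g k = g' k" if "k \<in> {..<n}" for k
      using arg_cong[OF eq, of "\<lambda>p. coeff p k"] that by (simp add: nth_default_def)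
    then show "g = g'" using g by (rule PiE_ext[rotated 2])
  qed
  show "(\<lambda>g. Poly (map g [0..<n])) ` ({..<n} \<rightarrow>\<^sub>E (UNIV :: 'a set)) = {F. \<forall>k\<ge>n. coeff F k = 0}"
  proof
    show "(\<lambda>g. Poly (map g [0..<n])) ` ({..<n} \<rightarrow>\<^sub>E (UNIV :: 'a set)) \<subseteq> {F. \<forall>k\<ge>n. coeff F k = 0}"
      by (rule image_subsetI) (simp add: nth_default_def)
    show "{F. \<forall>k\<ge>n. coeff F k = 0} \<subseteq> (\<lambda>g. Poly (map g [0..<n])) ` ({..<n} \<rightarrow>\<^sub>E (UNIV :: 'a set))"
    proof
      fix F :: "'a poly" assume "F \<in> {F. \<forall>k\<ge>n. coeff F k = 0}"
      then have "F = Poly (map (restrict (coeff F) {..<n}) [0..<n])"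
        by (intro poly_eqI) (simp add: nth_default_def not_less)
      moreover have "restrict (coeff F) {..<n} \<in> {..<n} \<rightarrow>\<^sub>E UNIV" by simp
      ultimately show "F \<in> (\<lambda>g. Poly (map g [0..<n])) ` ({..<n} \<rightarrow>\<^sub>E UNIV)" by (rule image_eqI)
    qed
  qed
qed

lemma inj_on_bounded_degree_onto:
  fixes E :: "'a::comm_ring_1 poly \<Rightarrow> 'b \<Rightarrow> 'a"
  assumes fin: "finite (UNIV :: 'a set)" and I: "finite I" "card I = n"
    and inj: "inj_on E {F. \<forall>k\<ge>n. coeff F k = 0}"
    and into: "E ` {F. \<forall>k\<ge>n. coeff F k = 0} \<subseteq> I \<rightarrow>\<^sub>E UNIV"
  shows "E ` {F. \<forall>k\<ge>n. coeff F k = 0} = I \<rightarrow>\<^sub>E UNIV"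
proof (rule card_subset_eq[OF _ into])
  show "finite (I \<rightarrow>\<^sub>E (UNIV :: 'a set))" using I fin by (simp add: finite_PiE)
  have "card ({..<n} \<rightarrow>\<^sub>E (UNIV :: 'a set)) = card {F :: 'a poly. \<forall>k\<ge>n. coeff F k = 0}"
    by (rule bij_betw_same_card[OF bij_betw_Poly_bounded_degree])
  then show "card (E ` {F. \<forall>k\<ge>n. coeff F k = 0}) = card (I \<rightarrow>\<^sub>E (UNIV :: 'a set))"
    using card_image[OF inj] I by (simp add: card_PiE)
qed

lemma sum_decrement:
  fixes ns :: "'b \<Rightarrow> nat"
  assumes "finite A" "i0 \<in> A" "ns i0 \<noteq> 0"
  shows "(\<Sum>i\<in>A. if i = i0 then ns i - 1 else ns i) = (\<Sum>i\<in>A. ns i) - 1"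
proof -
  have "(\<Sum>i\<in>A. if i = i0 then ns i - 1 else ns i) = (ns i0 - 1) + (\<Sum>i\<in>A - {i0}. ns i)"
    using assms(1,2) by (simp add: sum.remove)
  also have "\<dots> = (\<Sum>i\<in>A. ns i) - 1" using assms by (simp add: sum.remove)
  finally show ?thesis .
qed

locale skew_points = skew_setting R \<sigma> for R :: "'a::comm_ring_1 set" and \<sigma> +
  fixes l :: nat and a :: "nat \<Rightarrow> 'a"
  assumes a_units: "\<And>i. i \<in> {1..l} \<Longrightarrow> a i dvd 1"
    and classes_distinct:
      "\<And>i j d. i \<in> {1..l} \<Longrightarrow> j \<in> {1..l} \<Longrightarrow> i \<noteq> j \<Longrightarrow> d dvd 1 \<Longrightarrow> (a i - sconj \<sigma> (a j) d) dvd 1"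
begin

lemma R_lin_indep_deflate:
  assumes i0: "i0 \<in> {1..l}" "ns i0 \<noteq> 0" and i: "i \<in> {1..l}"
    and indep: "\<And>i. i \<in> {1..l} \<Longrightarrow> R_lin_indep R (ns i) (\<beta> i)"
  shows "R_lin_indep R (if i = i0 then ns i - 1 else ns i)
    (\<lambda>j. skew_eval_x_minus \<sigma> (sconj \<sigma> (a i0) (\<beta> i0 1)) (a i) (\<beta> i (if i = i0 then Suc j else j)))"
proof (cases "i = i0")
  case True
  have "R_lin_indep R (Suc (ns i0 - 1)) (\<beta> i0)" using indep[OF i0(1)] i0(2) by simp
  from R_lin_indep_skew_eval_x_minus_tail[OF this a_units[OF i0(1)]] show ?thesis using True by simp
next
  case False
  have "\<beta> i0 1 dvd 1" using R_lin_indep_dvd_one[OF indep[OF i0(1)]] i0(2) by simp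
  then have "\<And>g. skew_eval_x_minus \<sigma> (sconj \<sigma> (a i0) (\<beta> i0 1)) (a i) g = 0 \<Longrightarrow> g = 0"
    using skew_eval_x_minus_inj skew_eval_x_minus_dvd_one[OF aut classes_distinct[OF i i0(1) False]]
    by blast
  then show ?thesis using R_lin_indep_skew_eval_x_minus[OF indep[OF i]] False by simp
qed

text \<open>Dividing by \<open>x - a\<^sub>i\<^sub>0\<^sup>\<beta>\<close> with \<open>\<beta> = \<beta>\<^sub>i\<^sub>0\<^sub>,\<^sub>1\<close> leaves no remainder; the quotient vanishes at
  the deflated points, which are one fewer and again independent.\<close>
lemma skew_eval_seq_vanishing_eq_0:
  assumes "(\<Sum>i=1..l. ns i) = N" "\<And>i. i \<in> {1..l} \<Longrightarrow> R_lin_indep R (ns i) (\<beta> i)"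
    and "\<forall>k\<ge>N. f k = 0"
    and "\<And>i j. i \<in> {1..l} \<Longrightarrow> j \<in> {1..ns i} \<Longrightarrow> skew_eval_seq \<sigma> N f (a i) (\<beta> i j) = 0"
  shows "f k = 0"
  using assms
proof (induction N arbitrary: ns \<beta> f k)
  case (Suc N)
  obtain i0 where i0: "i0 \<in> {1..l}" "ns i0 \<noteq> 0"
    using Suc.prems(1) by (metis Suc_neq_Zero sum.neutral)
  define b where "b = sconj \<sigma> (a i0) (\<beta> i0 1)"
  have b0: "\<beta> i0 1 dvd 1" using R_lin_indep_dvd_one[OF Suc.prems(2)[OF i0(1)]] i0(2) by simp
  obtain Q r where Q: "\<forall>k\<ge>N. Q k = 0"
    and f: "f = (\<lambda>k. mult_x_minus \<sigma> Q b k + (if k = 0 then r else 0))"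
    using right_division_x_minus[of N f] Suc.prems(3) by (metis Suc_leI)
  have eval: "skew_eval_seq \<sigma> (Suc N) f x g = skew_eval_seq \<sigma> N Q x (skew_eval_x_minus \<sigma> b x g) + r * g"
    for x g unfolding f using skew_eval_seq_mult_x_minus[OF aut Q] .
  have "skew_eval_x_minus \<sigma> b (a i0) (\<beta> i0 1) = 0"
    unfolding b_def using b0 by (rule skew_eval_x_minus_sconj_self[OF aut])
  moreover have "skew_eval_seq \<sigma> (Suc N) f (a i0) (\<beta> i0 1) = 0"
    using Suc.prems(4)[OF i0(1), of 1] i0(2) by simp
  ultimately have "r * \<beta> i0 1 = 0" using eval[of "a i0" "\<beta> i0 1"] skew_eval_seq_at_0[OF aut] by simp
  then have "r * (\<beta> i0 1 * unit_inv (\<beta> i0 1)) = 0" by (simp add: mult.assoc[symmetric])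
  then have r: "r = 0" using unit_inv_right[OF b0] by simp
  define ns' where "ns' i = (if i = i0 then ns i - 1 else ns i)" for i
  define \<beta>' where "\<beta>' i j = skew_eval_x_minus \<sigma> b (a i) (\<beta> i (if i = i0 then Suc j else j))" for i j
  have "(\<Sum>i=1..l. ns' i) = N"
    using sum_decrement[where ns = ns, OF _ i0] Suc.prems(1) unfolding ns'_def by simp
  moreover have "R_lin_indep R (ns' i) (\<beta>' i)" if "i \<in> {1..l}" for i
    using R_lin_indep_deflate[where ns = ns and \<beta> = \<beta>, OF i0 that Suc.prems(2)]
    unfolding ns'_def \<beta>'_def b_def .
  moreover have "skew_eval_seq \<sigma> N Q (a i) (\<beta>' i j) = 0" if "i \<in> {1..l}" "j \<in> {1..ns' i}" for i j
  proof -
    have "(if i = i0 then Suc j else j) \<in> {1..ns i}" using that by (auto simp: ns'_def)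
    then show ?thesis using Suc.prems(4)[OF that(1)] eval r by (simp add: \<beta>'_def)
  qed
  ultimately have "Q k = 0" for k using Suc.IH Q by blast
  then show ?case using f r by (simp add: mult_x_minus_def)
qed simp

lemma skew_eval_eq_imp_eq:
  assumes indep: "\<And>i. i \<in> {1..l} \<Longrightarrow> R_lin_indep R (ns i) (\<beta> i)"
    and F: "\<forall>k\<ge>(\<Sum>i=1..l. ns i). coeff F k = 0" and G: "\<forall>k\<ge>(\<Sum>i=1..l. ns i). coeff G k = 0"
    and agree: "\<And>i j. i \<in> {1..l} \<Longrightarrow> j \<in> {1..ns i} \<Longrightarrow>
      skew_eval \<sigma> F (a i) (\<beta> i j) = skew_eval \<sigma> G (a i) (\<beta> i j)"
  shows "F = G"
proof (rule poly_eqI)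
  fix k
  have "skew_eval_seq \<sigma> (\<Sum>i=1..l. ns i) (\<lambda>k. coeff F k - coeff G k) (a i) (\<beta> i j) = 0"
    if "i \<in> {1..l}" "j \<in> {1..ns i}" for i j
    using agree[OF that] skew_eval_eq_skew_eval_seq[OF F] skew_eval_eq_skew_eval_seq[OF G]
    by (simp add: skew_eval_seq_diff)
  moreover have "\<forall>k\<ge>(\<Sum>i=1..l. ns i). coeff F k - coeff G k = 0" using F G by simp
  ultimately have "coeff F k - coeff G k = 0"
    by (intro skew_eval_seq_vanishing_eq_0[where f = "\<lambda>k. coeff F k - coeff G k", OF refl indep])
  then show "coeff F k = coeff G k" by simp
qed

lemma skew_interpolation_exists:
  assumes fin: "finite (UNIV :: 'a set)"
    and indep: "\<And>i. i \<in> {1..l} \<Longrightarrow> R_lin_indep R (ns i) (\<beta> i)"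
  obtains F where "\<forall>k\<ge>(\<Sum>i=1..l. ns i). coeff F k = 0"
    "\<And>i j. i \<in> {1..l} \<Longrightarrow> j \<in> {1..ns i} \<Longrightarrow> skew_eval \<sigma> F (a i) (\<beta> i j) = c i j"
proof -
  define n where "n = (\<Sum>i=1..l. ns i)"
  define I where "I = (SIGMA i:{1..l}. {1..ns i})"
  define E where "E F = (\<lambda>(i, j) \<in> I. skew_eval \<sigma> F (a i) (\<beta> i j))" for F
  have inj: "inj_on E {F. \<forall>k\<ge>n. coeff F k = 0}"
  proof (rule inj_onI)
    fix F G assume F: "F \<in> {F. \<forall>k\<ge>n. coeff F k = 0}" and G: "G \<in> {F. \<forall>k\<ge>n. coeff F k = 0}"
      and "E F = E G"
    have "skew_eval \<sigma> F (a i) (\<beta> i j) = skew_eval \<sigma> G (a i) (\<beta> i j)"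
      if "i \<in> {1..l}" "j \<in> {1..ns i}" for i j
      using fun_cong[OF \<open>E F = E G\<close>, of "(i, j)"] that by (simp add: E_def I_def)
    then show "F = G" using skew_eval_eq_imp_eq[OF indep] F G by (simp add: n_def)
  qed
  have I: "finite I" "card I = n" by (simp_all add: I_def n_def)
  have "E ` {F. \<forall>k\<ge>n. coeff F k = 0} \<subseteq> I \<rightarrow>\<^sub>E UNIV"
    by (rule image_subsetI) (simp add: E_def restrict_PiE_iff)
  then have "E ` {F. \<forall>k\<ge>n. coeff F k = 0} = I \<rightarrow>\<^sub>E UNIV"
    by (rule inj_on_bounded_degree_onto[OF fin I inj])
  moreover have "(\<lambda>(i, j) \<in> I. c i j) \<in> I \<rightarrow>\<^sub>E UNIV" by simp
  ultimately have "(\<lambda>(i, j) \<in> I. c i j) \<in> E ` {F. \<forall>k\<ge>n. coeff F k = 0}" by simp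
  then obtain F where EF: "(\<lambda>(i, j) \<in> I. c i j) = E F" and F: "\<forall>k\<ge>n. coeff F k = 0"
    by (rule imageE) simp
  show thesis
  proof (rule that)
    show "\<forall>k\<ge>(\<Sum>i=1..l. ns i). coeff F k = 0" using F by (simp add: n_def)
    fix i j assume "i \<in> {1..l}" "j \<in> {1..ns i}"
    then show "skew_eval \<sigma> F (a i) (\<beta> i j) = c i j"
      using fun_cong[OF EF, of "(i, j)"] by (simp add: E_def I_def)
  qed
qed


lemma skew_interpolation_ex1:
  assumes fin: "finite (UNIV :: 'a set)"
    and indep: "\<And>i. i \<in> {1..l} \<Longrightarrow> R_lin_indep R (ns i) (\<beta> i)"
  shows "\<exists>!F. (\<forall>k\<ge>(\<Sum>i=1..l. ns i). coeff F k = 0) \<and>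
    (\<forall>i\<in>{1..l}. \<forall>j\<in>{1..ns i}. skew_eval \<sigma> F (a i) (\<beta> i j) = c i j)"
proof -
  obtain F where F: "\<forall>k\<ge>(\<Sum>i=1..l. ns i). coeff F k = 0"
    "\<And>i j. i \<in> {1..l} \<Longrightarrow> j \<in> {1..ns i} \<Longrightarrow> skew_eval \<sigma> F (a i) (\<beta> i j) = c i j"
    using skew_interpolation_exists[where ns = ns and \<beta> = \<beta> and c = c, OF fin indep] by blast
  show ?thesis
  proof (rule ex1I[of _ F])
    fix G assume G: "(\<forall>k\<ge>(\<Sum>i=1..l. ns i). coeff G k = 0) \<and>
      (\<forall>i\<in>{1..l}. \<forall>j\<in>{1..ns i}. skew_eval \<sigma> G (a i) (\<beta> i j) = c i j)"
    show "G = F"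
    proof (rule skew_eval_eq_imp_eq[where ns = ns and \<beta> = \<beta>, OF indep])
      show "\<forall>k\<ge>(\<Sum>i=1..l. ns i). coeff G k = 0" using G by blast
      fix i j assume "i \<in> {1..l}" "j \<in> {1..ns i}"
      then show "skew_eval \<sigma> G (a i) (\<beta> i j) = skew_eval \<sigma> F (a i) (\<beta> i j)" using G F(2) by simp
    qed (simp_all add: F(1))
  qed (use F in blast)
qed

end

lemma galois_ctx_skew_setting:
  fixes R :: "'a::{comm_ring_1,finite} set"
  assumes ctx: "galois_ctx R h \<sigma>"
  shows "skew_setting R \<sigma>"
proof
  have cr: "chain_ring R" and hq: "is_quot_by R h" and gal: "\<sigma> \<in> galois_group R"
    using ctx unfolding galois_ctx_def by blast+
  show "ring_aut \<sigma>" using gal unfolding galois_group_def by blast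
  show "{x. \<sigma> x = x} = R" using ctx unfolding galois_ctx_def by blast
  show "\<exists>r\<in>R. \<exists>w. w dvd 1 \<and> s = r * w" for s
    by (rule chain_ring_extension_base_times_unit[OF cr hq])
  show "\<exists>r\<in>R. r \<noteq> 0 \<and> r * b = 0" if "\<not> b dvd 1" for b
    using cr hq that by (rule chain_ring_extension_nonunit_annihilated)
qed

theorem theorem4:
  fixes R :: "'a::{comm_ring_1,finite} set" and h :: "'a poly" and \<sigma> :: "'a \<Rightarrow> 'a"
    and l :: nat and ns :: "nat \<Rightarrow> nat" and a :: "nat \<Rightarrow> 'a"
    and \<beta> :: "nat \<Rightarrow> nat \<Rightarrow> 'a" and c :: "nat \<Rightarrow> nat \<Rightarrow> 'a"
  assumes ctx: "galois_ctx R h \<sigma>"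
    and a_units: "\<forall>i\<in>{1..l}. a i dvd 1"
    and cond_i: "\<forall>i j b. 1 \<le> i \<and> i < j \<and> j \<le> l \<and> b dvd 1 \<longrightarrow> (a i - sconj \<sigma> (a j) b) dvd 1"
    and cond_ii: "\<forall>i\<in>{1..l}. R_lin_indep R (ns i) (\<beta> i)"
  shows "\<exists>!F :: 'a poly. (\<forall>k \<ge> (\<Sum>i=1..l. ns i). coeff F k = 0) \<and>
           (\<forall>i\<in>{1..l}. \<forall>j\<in>{1..ns i}. skew_eval \<sigma> F (a i) (\<beta> i j) = c i j)"
proof -
  have setting: "skew_setting R \<sigma>" using ctx by (rule galois_ctx_skew_setting)
  then have aut: "ring_aut \<sigma>" by (rule skew_setting.aut)
  have "skew_points R \<sigma> l a"
    using a_units sconj_diff_dvd_one_symmetric[OF aut cond_i]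
    by (intro skew_points.intro[OF setting] skew_points_axioms.intro) auto
  then interpret skew_points R \<sigma> l a .
  show ?thesis using skew_interpolation_ex1[OF finite_UNIV] cond_ii by blast
qed

end
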